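(* There exists a system $S$ of communicating finite state machines (with peer-to-peer FIFO communication) that is $1$-synchronizable but not synchronizable.
   Context: A message set $M=(\Sigma_M,n,\mathrm{src},\mathrm{dst})$ consists of a finite set $\Sigma_M$ of messages, a number $n\ge 1$ of peers, and maps $\mathrm{src},\mathrm{dst}:\Sigma_M\to\{1,\dots,n\}$ with $\mathrm{src}(a)\neq\mathrm{dst}(a)$. Actions are $!a$ (send, performed by peer $\mathrm{src}(a)$) and $?a$ (receive, performed by peer $\mathrm{dst}(a)$), $a\in\Sigma_M$. An $M$-trace is a finite sequence of actions; $!?a$ abbreviates $!a\cdot ?a$. For a trace $\tau$: $\pi_!(\tau)$ is the sequence of messages sent in $\tau$; $\pi_?(\tau)$ the sequence of messages received; for channel $i\to j$, $\mathrm{buf}_{i\to j}(\tau)$ is the word $w$ (if it exists) such that (sent messages on channel $i\to j$ in $\tau$) $=$ (received messages on channel $i\to j$ in $\tau$)$\cdot w$. $\tau$ is FIFO (resp. $k$-bounded FIFO) if for all $i,j$ and all prefixes $\tau'$ of $\tau$, $\mathrm{buf}_{i\to j}(\tau')$ is defined (resp. defined and of length $\le k$). $\tau$ is synchronous if $\tau=!?a_1\cdots !?a_k$ for some $k\ge0$. A system $S=(P_1,\dots,P_n)$ consists of finite automata $P_i$ (all states accepting) over the actions of peer $i$. A configuration is a tuple of control states, one per peer, together with a word $w_{i,j}\in\Sigma_M^*$ (content of FIFO channel $i\to j$) for each $i\neq j$; it is stable if all channels are empty. A send $!a$ with $\mathrm{src}(a)=i,\mathrm{dst}(a)=j$ moves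 $P_i$ along a $!a$-transition and appends $a$ to $w_{i,j}$; a receive $?a$ moves $P_j$ along a $?a$-transition and removes $a$ from the head of $w_{i,j}$. The initial configuration $c_0$ has initial states and empty channels. A trace of $S$ is a $\tau$ with $c_0\xrightarrow{\tau}c$ for some $c$. $T_k(S)$ ($k\ge1$) is the set of $k$-bounded FIFO traces of $S$, $T_0(S)$ the set of synchronous traces of $S$, $T_\omega(S)=\bigcup_{k\ge0}T_k(S)$. $ST_k(S)=\{\pi_!(\tau)\mid \tau\in T_k(S)\}\cup\{(\pi_!(\tau),c)\mid c_0\xrightarrow{\tau}c,\ c\text{ stable},\ \tau\in T_k(S)\}$. $S$ is synchronizable if $ST_0(S)=ST_\omega(S)$, and $k$-synchronizable ($k\ge1$) if $ST_0(S)=ST_k(S)$. *)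

theory Defs
  imports Main
begin

(* Messages and control states are encoded as natural numbers; peers are 1..n. *)

record msgset =
  msgs :: "nat set"
  npeers :: nat
  src :: "nat \<Rightarrow> nat"
  dst :: "nat \<Rightarrow> nat"

definition wf_msgset :: "msgset \<Rightarrow> bool" where
  "wf_msgset M \<longleftrightarrow> finite (msgs M) \<and> npeers M \<ge> 1 \<and>
     (\<forall>a\<in>msgs M. src M a \<in> {1..npeers M} \<and> dst M a \<in> {1..npeers M} \<and> src M a \<noteq> dst M a)"

datatype act = Send nat | Recv nat

definition peer_actions :: "msgset \<Rightarrow> nat \<Rightarrow> act set" where
  "peer_actions M i = {Send a | a. a \<in> msgs M \<and> src M a = i} \<union> {Recv a | a. a \<in> msgs M \<and> dst M a = i}"

(* finite automaton, all states accepting *)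
record automaton =
  states :: "nat set"
  init :: nat
  trans :: "(nat \<times> act \<times> nat) set"

definition wf_peer :: "msgset \<Rightarrow> nat \<Rightarrow> automaton \<Rightarrow> bool" where
  "wf_peer M i A \<longleftrightarrow> finite (states A) \<and> init A \<in> states A \<and>
     trans A \<subseteq> states A \<times> peer_actions M i \<times> states A"

definition wf_system :: "msgset \<Rightarrow> (nat \<Rightarrow> automaton) \<Rightarrow> bool" where
  "wf_system M P \<longleftrightarrow> wf_msgset M \<and> (\<forall>i\<in>{1..npeers M}. wf_peer M i (P i))"

(* configuration: control state of each peer, content of channel i \<rightarrow> j *)
type_synonym config = "(nat \<Rightarrow> nat) \<times> (nat \<Rightarrow> nat \<Rightarrow> nat list)"

definition init_config :: "(nat \<Rightarrow> automaton) \<Rightarrow> config" where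
  "init_config P = ((\<lambda>i. init (P i)), (\<lambda>i j. []))"

definition stable :: "config \<Rightarrow> bool" where
  "stable c \<longleftrightarrow> (\<forall>i j. snd c i j = [])"

inductive step :: "msgset \<Rightarrow> (nat \<Rightarrow> automaton) \<Rightarrow> config \<Rightarrow> act \<Rightarrow> config \<Rightarrow> bool" where
  send: "\<lbrakk> a \<in> msgs M; i = src M a; j = dst M a; (fst c i, Send a, q') \<in> trans (P i) \<rbrakk>
     \<Longrightarrow> step M P c (Send a) ((fst c)(i := q'), (snd c)(i := (snd c i)(j := snd c i j @ [a])))"
| recv: "\<lbrakk> a \<in> msgs M; i = src M a; j = dst M a; snd c i j = a # w; (fst c j, Recv a, q') \<in> trans (P j) \<rbrakk>
     \<Longrightarrow> step M P c (Recv a) ((fst c)(j := q'), (snd c)(i := (snd c i)(j := w)))"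

inductive steps :: "msgset \<Rightarrow> (nat \<Rightarrow> automaton) \<Rightarrow> config \<Rightarrow> act list \<Rightarrow> config \<Rightarrow> bool" where
  nil: "steps M P c [] c"
| cons: "\<lbrakk> step M P c x c'; steps M P c' \<tau> c'' \<rbrakk> \<Longrightarrow> steps M P c (x # \<tau>) c''"

definition is_trace :: "msgset \<Rightarrow> (nat \<Rightarrow> automaton) \<Rightarrow> act list \<Rightarrow> bool" where
  "is_trace M P \<tau> \<longleftrightarrow> (\<exists>c. steps M P (init_config P) \<tau> c)"

fun sent :: "act list \<Rightarrow> nat list" where
  "sent [] = []"
| "sent (Send a # \<tau>) = a # sent \<tau>"
| "sent (Recv a # \<tau>) = sent \<tau>"

fun received :: "act list \<Rightarrow> nat list" where
  "received [] = []"
| "received (Send a # \<tau>) = received \<tau>"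
| "received (Recv a # \<tau>) = a # received \<tau>"

definition on_channel :: "msgset \<Rightarrow> nat \<Rightarrow> nat \<Rightarrow> nat list \<Rightarrow> nat list" where
  "on_channel M i j w = filter (\<lambda>a. src M a = i \<and> dst M a = j) w"

(* buf_{i\<rightarrow>j}(\<tau>) is defined and equals w *)
definition buf_is :: "msgset \<Rightarrow> nat \<Rightarrow> nat \<Rightarrow> act list \<Rightarrow> nat list \<Rightarrow> bool" where
  "buf_is M i j \<tau> w \<longleftrightarrow> on_channel M i j (sent \<tau>) = on_channel M i j (received \<tau>) @ w"

definition fifo_trace :: "msgset \<Rightarrow> act list \<Rightarrow> bool" where
  "fifo_trace M \<tau> \<longleftrightarrow> (\<forall>n i j. \<exists>w. buf_is M i j (take n \<tau>) w)"

definition bounded_fifo_trace :: "nat \<Rightarrow> msgset \<Rightarrow> act list \<Rightarrow> bool" where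
  "bounded_fifo_trace k M \<tau> \<longleftrightarrow> (\<forall>n i j. \<exists>w. buf_is M i j (take n \<tau>) w \<and> length w \<le> k)"

definition synchronous :: "act list \<Rightarrow> bool" where
  "synchronous \<tau> \<longleftrightarrow> (\<exists>as. \<tau> = concat (map (\<lambda>a. [Send a, Recv a]) as))"

definition T :: "nat \<Rightarrow> msgset \<Rightarrow> (nat \<Rightarrow> automaton) \<Rightarrow> act list set" where
  "T k M P = {\<tau>. is_trace M P \<tau> \<and> (if k = 0 then synchronous \<tau> else bounded_fifo_trace k M \<tau>)}"

definition T_omega :: "msgset \<Rightarrow> (nat \<Rightarrow> automaton) \<Rightarrow> act list set" where
  "T_omega M P = (\<Union>k. T k M P)"

(* ST from a set of traces; Inl = send sequence, Inr = (send sequence, stable configuration) *)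
definition ST_of :: "msgset \<Rightarrow> (nat \<Rightarrow> automaton) \<Rightarrow> act list set \<Rightarrow> (nat list + nat list \<times> config) set" where
  "ST_of M P Tr = {Inl (sent \<tau>) | \<tau>. \<tau> \<in> Tr} \<union>
     {Inr (sent \<tau>, c) | \<tau> c. \<tau> \<in> Tr \<and> steps M P (init_config P) \<tau> c \<and> stable c}"

definition ST :: "nat \<Rightarrow> msgset \<Rightarrow> (nat \<Rightarrow> automaton) \<Rightarrow> (nat list + nat list \<times> config) set" where
  "ST k M P = ST_of M P (T k M P)"

definition ST_omega :: "msgset \<Rightarrow> (nat \<Rightarrow> automaton) \<Rightarrow> (nat list + nat list \<times> config) set" where
  "ST_omega M P = ST_of M P (T_omega M P)"

definition synchronizable :: "msgset \<Rightarrow> (nat \<Rightarrow> automaton) \<Rightarrow> bool" where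
  "synchronizable M P \<longleftrightarrow> ST 0 M P = ST_omega M P"

definition k_synchronizable :: "nat \<Rightarrow> msgset \<Rightarrow> (nat \<Rightarrow> automaton) \<Rightarrow> bool" where
  "k_synchronizable k M P \<longleftrightarrow> ST 0 M P = ST k M P"

end

theory Submission
  imports Defs
begin

(* Peer 1 sends 1 and then 2 to peer 2, and then 3 to peer 3; on receiving 3, peer 3 sends 4 to
   peer 2. Peer 2 accepts the orders 1 2 4 and 4 1 2, ending in different states. With channels of
   capacity 1, peer 1 can only send 2 once 1 has been received, and 4 is only sent after 2, so
   4 always arrives after 1. Hence every 1-bounded run sends a prefix of 1 2 3 4 and its stable
   configurations are determined by that prefix, exactly as for synchronous runs.
   With capacity 2, messages 1 and 2 wait in their channel while 3 and 4 overtake them, which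
   leads peer 2 to a stable state that no synchronous run reaches. *)

lemma sent_append [simp]: "sent (\<tau> @ \<sigma>) = sent \<tau> @ sent \<sigma>"
  by (induction \<tau> rule: sent.induct) auto

lemma received_append [simp]: "received (\<tau> @ \<sigma>) = received \<tau> @ received \<sigma>"
  by (induction \<tau> rule: received.induct) auto

lemma steps_Nil_iff: "steps M P c [] c' \<longleftrightarrow> c' = c"
  by (auto intro: steps.nil elim: steps.cases)

lemma steps_Cons_iff:
  "steps M P c (x # \<tau>) c'' \<longleftrightarrow> (\<exists>c'. step M P c x c' \<and> steps M P c' \<tau> c'')"
  by (blast intro: steps.cons elim: steps.cases)

lemma steps_append_iff:
  "steps M P c (\<tau> @ \<sigma>) c'' \<longleftrightarrow> (\<exists>c'. steps M P c \<tau> c' \<and> steps M P c' \<sigma> c'')"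
  by (induction \<tau> arbitrary: c)
    (simp_all add: steps_Nil_iff steps_Cons_iff del: split_paired_Ex, blast)

lemma steps_single_iff: "steps M P c [x] c' \<longleftrightarrow> step M P c x c'"
  by (simp add: steps_Cons_iff steps_Nil_iff del: split_paired_Ex)

lemma is_trace_prefix: "is_trace M P (\<tau> @ \<sigma>) \<Longrightarrow> is_trace M P \<tau>"
  by (auto simp: is_trace_def steps_append_iff)

lemma step_buf_is:
  assumes "step M P c x c'" and "\<forall>i j. buf_is M i j \<tau> (snd c i j)"
  shows "buf_is M i j (\<tau> @ [x]) (snd c' i j)"
  using assms by cases (auto simp: buf_is_def on_channel_def)

lemma steps_buf_is:
  assumes "steps M P c \<sigma> c'" and "\<forall>i j. buf_is M i j \<tau> (snd c i j)"
  shows "buf_is M i j (\<tau> @ \<sigma>) (snd c' i j)"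
  using assms
proof (induction arbitrary: \<tau> rule: steps.induct)
  case (nil M P c)
  then show ?case by simp
next
  case (cons M P c x c' \<sigma> c'')
  have "\<forall>i j. buf_is M i j (\<tau> @ [x]) (snd c' i j)"
    using step_buf_is[OF cons.hyps(1) cons.prems] by blast
  from cons.IH[OF this] show ?case by simp
qed

lemma reachable_buf_is:
  assumes "steps M P (init_config P) \<tau> c"
  shows "buf_is M i j \<tau> (snd c i j)"
  using steps_buf_is[OF assms, of "[]"] by (simp add: buf_is_def init_config_def on_channel_def)

lemma buf_is_unique: "buf_is M i j \<tau> w \<Longrightarrow> buf_is M i j \<tau> w' \<Longrightarrow> w = w'"
  by (simp add: buf_is_def)

lemma bounded_fifo_trace_prefix:
  assumes "bounded_fifo_trace k M (\<tau> @ \<sigma>)"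
  shows "bounded_fifo_trace k M \<tau>"
  unfolding bounded_fifo_trace_def
proof (intro allI)
  fix n i j
  have "take n \<tau> = take (min n (length \<tau>)) (\<tau> @ \<sigma>)" by (simp add: min_def)
  with assms show "\<exists>w. buf_is M i j (take n \<tau>) w \<and> length w \<le> k"
    unfolding bounded_fifo_trace_def by metis
qed

lemma bounded_fifo_channel_length:
  assumes "steps M P (init_config P) \<tau> c" and "bounded_fifo_trace k M \<tau>"
  shows "length (snd c i j) \<le> k"
proof -
  from assms(2) obtain w where "buf_is M i j \<tau> w" "length w \<le> k"
    unfolding bounded_fifo_trace_def by (metis take_all order_refl)
  with reachable_buf_is[OF assms(1)] show ?thesis by (metis buf_is_unique)
qed

lemma bounded_fifo_trace_if_channel_load:
  assumes "steps M P (init_config P) \<tau> c" and "\<And>i j. length (on_channel M i j (sent \<tau>)) \<le> k"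
  shows "bounded_fifo_trace k M \<tau>"
  unfolding bounded_fifo_trace_def
proof (intro allI)
  fix n i j
  obtain c' where "steps M P (init_config P) (take n \<tau>) c'"
    using assms(1) steps_append_iff[of M P _ "take n \<tau>" "drop n \<tau>"] by auto
  then have buf: "buf_is M i j (take n \<tau>) (snd c' i j)" by (rule reachable_buf_is)
  have "length (snd c' i j) \<le> length (on_channel M i j (sent (take n \<tau>)))"
    using buf by (simp add: buf_is_def)
  also have "\<dots> \<le> length (on_channel M i j (sent \<tau>))"
    using append_take_drop_id[of n \<tau>] sent_append
    by (metis le_add1 length_append on_channel_def filter_append)
  also have "\<dots> \<le> k" by (rule assms(2))
  finally show "\<exists>w. buf_is M i j (take n \<tau>) w \<and> length w \<le> k" using buf by blast
qed

abbreviation rendezvous :: "nat list \<Rightarrow> act list" where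
  "rendezvous as \<equiv> concat (map (\<lambda>a. [Send a, Recv a]) as)"

lemma sent_rendezvous [simp]: "sent (rendezvous as) = as"
  by (induction as) auto

lemma received_rendezvous [simp]: "received (rendezvous as) = as"
  by (induction as) auto

lemma rendezvous_take_drop: "rendezvous as = rendezvous (take n as) @ rendezvous (drop n as)"
  by (simp flip: concat_append map_append)

lemma take_rendezvous_cases:
  "\<exists>bs. take n (rendezvous as) = rendezvous bs \<or>
     (\<exists>a. take n (rendezvous as) = rendezvous bs @ [Send a])"
proof (induction as arbitrary: n)
  case Nil
  then show ?case by simp
next
  case (Cons a as)
  show ?case
  proof (cases n)
    case (Suc m)
    then show ?thesis
    proof (cases m)
      case (Suc l)
      obtain bs where "take l (rendezvous as) = rendezvous bs \<or>
          (\<exists>a. take l (rendezvous as) = rendezvous bs @ [Send a])"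
        using Cons.IH by blast
      with \<open>n = Suc m\<close> Suc show ?thesis by (intro exI[of _ "a # bs"]) auto
    qed (auto intro: exI[of _ "[]"])
  qed (auto intro: exI[of _ "[]"])
qed

lemma synchronous_bounded_fifo:
  assumes "synchronous \<tau>" and "1 \<le> k"
  shows "bounded_fifo_trace k M \<tau>"
  unfolding bounded_fifo_trace_def
proof (intro allI)
  fix n i j
  obtain as where \<tau>: "\<tau> = rendezvous as" using assms(1) unfolding synchronous_def by blast
  obtain bs where "take n \<tau> = rendezvous bs \<or> (\<exists>a. take n \<tau> = rendezvous bs @ [Send a])"
    using take_rendezvous_cases \<tau> by blast
  then show "\<exists>w. buf_is M i j (take n \<tau>) w \<and> length w \<le> k"
  proof (elim disjE exE)
    assume "take n \<tau> = rendezvous bs"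
    then show ?thesis by (intro exI[of _ "[]"]) (simp add: buf_is_def)
  next
    fix a assume "take n \<tau> = rendezvous bs @ [Send a]"
    then show ?thesis using assms(2)
      by (intro exI[of _ "on_channel M i j [a]"]) (auto simp: buf_is_def on_channel_def)
  qed
qed

lemma synchronous_stable:
  assumes "steps M P (init_config P) \<tau> c" and "synchronous \<tau>"
  shows "stable c"
  using reachable_buf_is[OF assms(1)] assms(2)
  by (auto simp: stable_def synchronous_def buf_is_def)

lemma T_0_subset_T: "T 0 M P \<subseteq> T k M P"
  by (cases k) (auto simp: T_def synchronous_bounded_fifo)

lemma ST_of_mono: "A \<subseteq> B \<Longrightarrow> ST_of M P A \<subseteq> ST_of M P B"
  unfolding ST_of_def by blast

lemma steps_idle_peer:
  assumes "steps M P c \<tau> c'" and "\<forall>a\<in>msgs M. src M a \<noteq> i \<and> dst M a \<noteq> i"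
  shows "fst c' i = fst c i"
  using assms
proof (induction rule: steps.induct)
  case (cons M P c x c' \<tau> c'')
  from cons.hyps(1) cons.prems have "fst c' i = fst c i" by cases auto
  with cons show ?case by simp
qed simp

definition ex_msgset :: msgset where
  "ex_msgset = \<lparr>msgs = {1, 2, 3, 4}, npeers = 3,
     src = (\<lambda>a. if a = 4 then 3 else 1), dst = (\<lambda>a. if a = 3 then 3 else 2)\<rparr>"

definition sender :: automaton where
  "sender = \<lparr>states = {0..3}, init = 0,
     trans = {(0, Send 1, 1), (1, Send 2, 2), (2, Send 3, 3)}\<rparr>"

definition receiver :: automaton where
  "receiver = \<lparr>states = {0..6}, init = 0,
        trans = {(0, Recv 1, 1), (1, Recv 2, 2), (2, Recv 4, 3),
              (0, Recv 4, 4), (4, Recv 1, 5), (5, Recv 2, 6)}\<rparr>"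

definition relay :: automaton where
  "relay = \<lparr>states = {0..2}, init = 0, trans = {(0, Recv 3, 1), (1, Send 4, 2)}\<rparr>"

definition ex_peers :: "nat \<Rightarrow> automaton" where
  "ex_peers i = (if i = 1 then sender else if i = 2 then receiver else if i = 3 then relay
     else \<lparr>states = {0}, init = 0, trans = {}\<rparr>)"

abbreviation ex_step :: "config \<Rightarrow> act \<Rightarrow> config \<Rightarrow> bool" where
  "ex_step \<equiv> step ex_msgset ex_peers"

abbreviation ex_run :: "act list \<Rightarrow> config \<Rightarrow> bool" where
  "ex_run \<tau> c \<equiv> steps ex_msgset ex_peers (init_config ex_peers) \<tau> c"

lemma ex_msgset_simps [simp]:
  "msgs ex_msgset = {1, 2, 3, 4}"
  "npeers ex_msgset = 3"
  "src ex_msgset a = (if a = 4 then 3 else 1)"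
  "dst ex_msgset a = (if a = 3 then 3 else 2)"
  by (simp_all add: ex_msgset_def)

lemma wf_ex_system: "wf_system ex_msgset ex_peers"
  by (auto simp: wf_system_def wf_msgset_def wf_peer_def peer_actions_def ex_peers_def
      sender_def receiver_def relay_def)

(* The part of a configuration that can change: the states of peers 1, 2, 3 and the contents of
   the channels 1 \<rightarrow> 2, 1 \<rightarrow> 3, 3 \<rightarrow> 2. *)
type_synonym view = "nat \<times> nat \<times> nat \<times> nat list \<times> nat list \<times> nat list"

definition view :: "config \<Rightarrow> view" where
  "view c = (fst c 1, fst c 2, fst c 3, snd c 1 2, snd c 1 3, snd c 3 2)"

inductive view_step :: "view \<Rightarrow> act \<Rightarrow> view \<Rightarrow> bool" where
  send_1_2: "a \<in> {1, 2} \<Longrightarrow> (p, Send a, p') \<in> trans sender \<Longrightarrow>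
    view_step (p, q, r, u, v, w) (Send a) (p', q, r, u @ [a], v, w)"
| send_1_3: "(p, Send 3, p') \<in> trans sender \<Longrightarrow>
    view_step (p, q, r, u, v, w) (Send 3) (p', q, r, u, v @ [3], w)"
| send_3_2: "(r, Send 4, r') \<in> trans relay \<Longrightarrow>
    view_step (p, q, r, u, v, w) (Send 4) (p, q, r', u, v, w @ [4])"
| recv_1_2: "a \<in> {1, 2} \<Longrightarrow> (q, Recv a, q') \<in> trans receiver \<Longrightarrow>
    view_step (p, q, r, a # u, v, w) (Recv a) (p, q', r, u, v, w)"
| recv_1_3: "(r, Recv 3, r') \<in> trans relay \<Longrightarrow>
    view_step (p, q, r, u, 3 # v, w) (Recv 3) (p, q, r', u, v, w)"
| recv_3_2: "(q, Recv 4, q') \<in> trans receiver \<Longrightarrow>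
    view_step (p, q, r, u, v, 4 # w) (Recv 4) (p, q', r, u, v, w)"

lemma ex_step_view_step:
  assumes "ex_step c x c'"
  shows "view_step (view c) x (view c')"
  using assms
proof cases
  case (send a i j q')
  then consider "a = 1" | "a = 2" | "a = 3" | "a = 4" by auto
  then show ?thesis using send by cases (simp_all add: view_def ex_peers_def view_step.intros)
next
  case (recv a i j w q')
  then consider "a = 1" | "a = 2" | "a = 3" | "a = 4" by auto
  then show ?thesis using recv by cases (simp_all add: view_def ex_peers_def view_step.intros)
qed

definition one_bounded_views :: "view set" where
  "one_bounded_views = {(0, 0, 0, [], [], []), (1, 0, 0, [1], [], []), (1, 1, 0, [], [], []),
     (2, 1, 0, [2], [], []), (2, 2, 0, [], [], []), (3, 1, 0, [2], [3], []),
     (3, 1, 1, [2], [], []), (3, 1, 2, [2], [], [4]), (3, 2, 0, [], [3], []),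
     (3, 2, 1, [], [], []), (3, 2, 2, [], [], [4]), (3, 3, 2, [], [], [])}"

lemma one_bounded_views_closed:
  assumes "view_step t x (p, q, r, u, v, w)" and "t \<in> one_bounded_views"
    and "length u \<le> 1" "length v \<le> 1" "length w \<le> 1"
  shows "(p, q, r, u, v, w) \<in> one_bounded_views"
  using assms
  by cases (simp_all add: one_bounded_views_def sender_def receiver_def relay_def,
      (elim disjE conjE; simp)+)

(* Peer 1 in state p has sent p messages; peer 3 has sent message 4 iff it is in state 2. *)
fun sends :: "view \<Rightarrow> nat" where
  "sends (p, q, r, _) = p + (if r = 2 then 1 else 0)"

lemma view_step_Send_sends:
  assumes "view_step t (Send a) t'" and "t \<in> one_bounded_views"
  shows "sends t < 4 \<and> a = [1, 2, 3, 4] ! sends t \<and> sends t' = Suc (sends t)"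
  using assms
  by cases (simp_all add: one_bounded_views_def sender_def relay_def, (elim disjE conjE; simp)+)

lemma view_step_Recv_sends:
  assumes "view_step t (Recv a) t'"
  shows "sends t' = sends t"
  using assms by cases (auto simp: relay_def)

lemma one_bounded_views_sends_le: "t \<in> one_bounded_views \<Longrightarrow> sends t \<le> 4"
  by (auto simp: one_bounded_views_def)

lemma one_bounded_run_view:
  assumes "ex_run \<tau> c" and "bounded_fifo_trace 1 ex_msgset \<tau>"
  shows "view c \<in> one_bounded_views \<and> sent \<tau> = take (sends (view c)) [1, 2, 3, 4]"
  using assms
proof (induction \<tau> arbitrary: c rule: rev_induct)
  case Nil
  then have "c = init_config ex_peers" by (simp add: steps_Nil_iff)
  then show ?case
    by (simp add: view_def init_config_def ex_peers_def sender_def receiver_def relay_def one_bounded_views_def)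
next
  case (snoc x \<tau>)
  obtain c0 where run: "ex_run \<tau> c0" and step: "ex_step c0 x c"
    using snoc.prems(1) unfolding steps_append_iff steps_single_iff by blast
  have IH: "view c0 \<in> one_bounded_views" "sent \<tau> = take (sends (view c0)) [1, 2, 3, 4]"
    using snoc.IH[OF run bounded_fifo_trace_prefix[OF snoc.prems(2)]] by auto
  have vs: "view_step (view c0) x (view c)" using step by (rule ex_step_view_step)
  have "length (snd c i j) \<le> 1" for i j using snoc.prems by (rule bounded_fifo_channel_length)
  then have "view c \<in> one_bounded_views"
    using one_bounded_views_closed[OF vs[unfolded view_def] IH(1)[unfolded view_def]] by (simp add: view_def)
  moreover have "sent (\<tau> @ [x]) = take (sends (view c)) [1, 2, 3, 4]"
  proof (cases x)
    case (Send a)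
    with view_step_Send_sends[OF vs[unfolded Send] IH(1)] IH(2) show ?thesis
      by (simp add: take_Suc_conv_app_nth del: take_Suc_Cons)
  next
    case (Recv a)
    with view_step_Recv_sends vs IH(2) show ?thesis by simp
  qed
  ultimately show ?case ..
qed

lemma one_bounded_stable_view_unique:
  assumes "(p, q, r, [], [], []) \<in> one_bounded_views" and "(p', q', r', [], [], []) \<in> one_bounded_views"
    and "sends (p, q, r, [], [], []) = sends (p', q', r', [], [], [])"
  shows "p = p' \<and> q = q' \<and> r = r'"
  using assms by (simp add: one_bounded_views_def) (elim disjE conjE; simp)

lemma one_bounded_stable_config_unique:
  assumes run: "ex_run \<tau> c" "bounded_fifo_trace 1 ex_msgset \<tau>" "stable c"
    and run': "ex_run \<tau>' c'" "bounded_fifo_trace 1 ex_msgset \<tau>'" "stable c'"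
    and "sent \<tau> = sent \<tau>'"
  shows "c = c'"
proof -
  from one_bounded_run_view[OF run(1,2)] one_bounded_run_view[OF run'(1,2)]
  have R: "view c \<in> one_bounded_views" "view c' \<in> one_bounded_views"
    and S: "sent \<tau> = take (sends (view c)) [1, 2, 3, 4]"
      "sent \<tau>' = take (sends (view c')) [1, 2, 3, 4]"
    by auto
  have "sends (view c) = length (sent \<tau>)" "sends (view c') = length (sent \<tau>')"
    using S one_bounded_views_sends_le[OF R(1)] one_bounded_views_sends_le[OF R(2)] by simp_all
  with \<open>sent \<tau> = sent \<tau>'\<close> have "sends (view c) = sends (view c')" by simp
  moreover have "view c = (fst c 1, fst c 2, fst c 3, [], [], [])"
    "view c' = (fst c' 1, fst c' 2, fst c' 3, [], [], [])"
    using \<open>stable c\<close> \<open>stable c'\<close> by (simp_all add: view_def stable_def)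
  ultimately have peers: "fst c i = fst c' i" if "i \<in> {1, 2, 3}" for i
    using one_bounded_stable_view_unique[of "fst c 1" "fst c 2" "fst c 3" "fst c' 1" "fst c' 2" "fst c' 3"]
      R that
    by auto
  have idle: "fst c i = fst c' i" if "i \<notin> {1, 2, 3}" for i
    using steps_idle_peer[OF run(1), of i] steps_idle_peer[OF run'(1), of i] that by auto
  have "fst c = fst c'" using peers idle by blast
  moreover have "snd c = snd c'"
    using \<open>stable c\<close> \<open>stable c'\<close> by (auto simp: stable_def fun_eq_iff)
  ultimately show ?thesis by (simp add: prod_eq_iff)
qed

lemma ex_rendezvous_prefix_T_0: "rendezvous (take n [1, 2, 3, 4]) \<in> T 0 ex_msgset ex_peers"
proof -
  have "is_trace ex_msgset ex_peers (rendezvous [1, 2, 3, 4])"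
    unfolding is_trace_def
    by (force intro!: steps.intros step.intros
        simp: ex_peers_def sender_def receiver_def relay_def init_config_def)
  then have "is_trace ex_msgset ex_peers
      (rendezvous (take n [1, 2, 3, 4]) @ rendezvous (drop n [1, 2, 3, 4]))"
    by (simp only: rendezvous_take_drop[symmetric])
  then have "is_trace ex_msgset ex_peers (rendezvous (take n [1, 2, 3, 4]))"
    by (rule is_trace_prefix)
  then show ?thesis by (auto simp: T_def synchronous_def)
qed

lemma ex_ST_1_subset_ST_0: "ST 1 ex_msgset ex_peers \<subseteq> ST 0 ex_msgset ex_peers"
proof
  fix x
  assume "x \<in> ST 1 ex_msgset ex_peers"
  then obtain \<tau> c where run: "ex_run \<tau> c" "bounded_fifo_trace 1 ex_msgset \<tau>"
    and x: "x = Inl (sent \<tau>) \<or> x = Inr (sent \<tau>, c) \<and> stable c"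
    unfolding ST_def ST_of_def T_def is_trace_def by auto
  define \<sigma> where "\<sigma> = rendezvous (sent \<tau>)"
  have "\<sigma> \<in> T 0 ex_msgset ex_peers"
    using one_bounded_run_view[OF run] ex_rendezvous_prefix_T_0 by (simp add: \<sigma>_def)
  then obtain c' where run': "ex_run \<sigma> c'" and sync: "synchronous \<sigma>"
    unfolding T_def is_trace_def by auto
  have sent_\<sigma>: "sent \<sigma> = sent \<tau>" by (simp add: \<sigma>_def)
  from x show "x \<in> ST 0 ex_msgset ex_peers"
  proof
    assume "x = Inl (sent \<tau>)"
    then have "x = Inl (sent \<sigma>)" using sent_\<sigma> by simp
    with \<open>\<sigma> \<in> T 0 ex_msgset ex_peers\<close> show ?thesis
      unfolding ST_def ST_of_def by blast
  next
    assume "x = Inr (sent \<tau>, c) \<and> stable c"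
    moreover have "c' = c" if "stable c"
      using one_bounded_stable_config_unique[OF run' synchronous_bounded_fifo[OF sync]
          synchronous_stable[OF run' sync] run that] sent_\<sigma> by simp
    ultimately have "x = Inr (sent \<sigma>, c') \<and> stable c'" using sent_\<sigma> by auto
    with \<open>\<sigma> \<in> T 0 ex_msgset ex_peers\<close> run' show ?thesis
      unfolding ST_def ST_of_def by blast
  qed
qed

lemma ex_not_synchronizable: "\<not> synchronizable ex_msgset ex_peers"
proof
  define \<tau> where "\<tau> = [Send 1, Send 2, Send 3, Recv 3, Send 4, Recv 4, Recv 1, Recv 2]"
  have "\<exists>c. ex_run \<tau> c \<and> stable c \<and> fst c 2 = 6"
    unfolding \<tau>_def
    by (force intro!: steps.intros step.intros
        simp: ex_peers_def sender_def receiver_def relay_def init_config_def stable_def)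
  then obtain c where run: "ex_run \<tau> c" and "stable c" and "fst c 2 = 6" by blast
  have "bounded_fifo_trace 2 ex_msgset \<tau>"
    using run by (rule bounded_fifo_trace_if_channel_load) (auto simp: \<tau>_def on_channel_def)
  moreover have "is_trace ex_msgset ex_peers \<tau>"
    using run unfolding is_trace_def by blast
  ultimately have "\<tau> \<in> T 2 ex_msgset ex_peers"
    by (simp add: T_def)
  then have "\<tau> \<in> T_omega ex_msgset ex_peers"
    unfolding T_omega_def by blast
  then have "Inr (sent \<tau>, c) \<in> ST_omega ex_msgset ex_peers"
    using run \<open>stable c\<close> unfolding ST_omega_def ST_of_def by blast
  moreover assume "synchronizable ex_msgset ex_peers"
  ultimately have "Inr (sent \<tau>, c) \<in> ST 0 ex_msgset ex_peers"
    unfolding synchronizable_def by simp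
  then obtain \<sigma> where run': "ex_run \<sigma> c" and "synchronous \<sigma>"
    unfolding ST_def ST_of_def T_def by auto
  then have "bounded_fifo_trace 1 ex_msgset \<sigma>"
    by (simp add: synchronous_bounded_fifo)
  with run' have "view c \<in> one_bounded_views"
    using one_bounded_run_view by blast
  with \<open>fst c 2 = 6\<close> show False by (auto simp: view_def one_bounded_views_def)
qed

theorem theorem2p3:
  shows "\<exists>M P. wf_system M P \<and> k_synchronizable 1 M P \<and> \<not> synchronizable M P"
proof (intro exI conjI)
  show "wf_system ex_msgset ex_peers" by (rule wf_ex_system)
  have "ST 0 ex_msgset ex_peers \<subseteq> ST 1 ex_msgset ex_peers"
    unfolding ST_def by (rule ST_of_mono[OF T_0_subset_T])
  with ex_ST_1_subset_ST_0 show "k_synchronizable 1 ex_msgset ex_peers"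
    unfolding k_synchronizable_def by blast
  show "\<not> synchronizable ex_msgset ex_peers" by (rule ex_not_synchronizable)
qed

end
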